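(* Let $\varepsilon,\Delta t,\Delta x_1,\Delta x_2,\underline{\rho},\underline{a}>0$, $\underline{\mathbf{u}}=(\underline{u}_1,\underline{u}_2)\in\mathbb{R}^2$ and $b^{(2)}_1,b^{(2)}_2,b^{(2)}_3\in\mathbb{R}$. Let $(\rho,\mathbf{u})\in C^1([0,\infty);H^2(\mathbb{T}^2)^3)$ solve $$\partial_t\begin{pmatrix}\rho\\ \mathbf{u}\end{pmatrix}+(\underline{\mathbf{u}}\cdot\nabla)\begin{pmatrix}\rho\\ \mathbf{u}\end{pmatrix}+\begin{pmatrix}\underline{\rho}\nabla\cdot\mathbf{u}\\ \frac{\underline{a}^2}{\underline{\rho}\varepsilon^2}\nabla\rho\end{pmatrix}=\mathcal{B}^{(2)}\begin{pmatrix}\rho\\ \mathbf{u}\end{pmatrix}$$ on $\mathbb{T}^2$, with $\mathcal{B}^{(2)}$ as in the context. If $(\rho(0,\cdot),\mathbf{u}(0,\cdot))\in\mathcal{E}$, then $(\rho(t,\cdot),\mathbf{u}(t,\cdot))\in\mathcal{E}$ for all $t>0$.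
   Context: $\mathcal{E}=\{(\rho,\mathbf{u})\in L^2(\mathbb{T}^2)^{3}:\nabla\rho=0,\ \nabla\cdot\mathbf{u}=0\}$. With $D=\underline{\mathbf{u}}\cdot\nabla$: $\mathcal{B}^{(2)}_{1,1}=\Delta t\big(b^{(2)}_1D^2+b^{(2)}_3\frac{\underline{a}^2}{\varepsilon^2}\Delta\big)+\frac12\sum_{k=1}^2\Delta x_k|\underline{u}_k|\partial_{x_k}^2$, $\mathcal{B}^{(2)}_{1,2}=\Delta t\,\underline{\rho}\,b^{(2)}_2D\nabla\cdot$, $\mathcal{B}^{(2)}_{2,1}=\Delta t\frac{\underline{a}^2}{\underline{\rho}\varepsilon^2}b^{(2)}_2D\nabla$, $\mathcal{B}^{(2)}_{2,2}=\Delta t\big(b^{(2)}_1D^2+b^{(2)}_3\frac{\underline{a}^2}{\varepsilon^2}\nabla\nabla\cdot\big)+\frac12\sum_{k=1}^2\Delta x_k|\underline{u}_k|\partial_{x_k}^2\mathbb{I}_2$ (first row scalar, second row vector valued). This is the modified equation of a first order fully-discrete IMEX-RK finite volume scheme applied to the linear wave system; in the paper the $b^{(2)}_i$ are specific polynomials in the Butcher coefficients. *)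

theory Defs
  imports "HOL-Analysis.Analysis"
begin

text \<open>Functions on the torus T^2 = R^2/(2 pi Z)^2 are represented by their Fourier
coefficients: c represents f(x) = sum over k in Z^2 of c k * exp(i k.x).
Real-valuedness is the Hermitian symmetry c(-k) = cnj(c k).
Weak derivatives are Fourier multipliers: d/dx_j  <->  i k_j.\<close>

type_synonym coef = "int \<times> int \<Rightarrow> complex"

definition real_valued :: "coef \<Rightarrow> bool" where
  "real_valued c \<longleftrightarrow> (\<forall>k. c (- fst k, - snd k) = cnj (c k))"

definition sob_weight :: "int \<times> int \<Rightarrow> real" where
  "sob_weight k = (1 + (of_int (fst k))\<^sup>2 + (of_int (snd k))\<^sup>2)\<^sup>2"

text \<open>L^2(T^2) (real valued) and H^2(T^2) (real valued), via Parseval.\<close>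
definition L2 :: "coef set" where
  "L2 = {c. real_valued c \<and> (\<lambda>k. (cmod (c k))\<^sup>2) summable_on UNIV}"

definition H2 :: "coef set" where
  "H2 = {c. real_valued c \<and> (\<lambda>k. sob_weight k * (cmod (c k))\<^sup>2) summable_on UNIV}"

definition h2norm :: "coef \<Rightarrow> real" where
  "h2norm c = sqrt (infsum (\<lambda>k. sob_weight k * (cmod (c k))\<^sup>2) UNIV)"

definition C1_H2 :: "(real \<Rightarrow> coef) \<Rightarrow> (real \<Rightarrow> coef) \<Rightarrow> bool" where
  "C1_H2 X X' \<longleftrightarrow> (\<forall>t\<ge>0. X t \<in> H2 \<and> X' t \<in> H2 \<and>
     ((\<lambda>s. h2norm (\<lambda>k. (X s k - X t k) / complex_of_real (s - t) - X' t k)) \<longlongrightarrow> 0)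
        (at t within {0..}) \<and>
     ((\<lambda>s. h2norm (\<lambda>k. X' s k - X' t k)) \<longlongrightarrow> 0) (at t within {0..}))"

definition dx1 :: "coef \<Rightarrow> coef" where
  "dx1 c = (\<lambda>k. \<i> * of_int (fst k) * c k)"

definition dx2 :: "coef \<Rightarrow> coef" where
  "dx2 c = (\<lambda>k. \<i> * of_int (snd k) * c k)"

definition dxj :: "nat \<Rightarrow> coef \<Rightarrow> coef" where
  "dxj j = (if j = 1 then dx1 else dx2)"

definition div2 :: "coef \<Rightarrow> coef \<Rightarrow> coef" where
  "div2 v1 v2 = (\<lambda>k. dx1 v1 k + dx2 v2 k)"

definition lap :: "coef \<Rightarrow> coef" where
  "lap c = (\<lambda>k. dx1 (dx1 c) k + dx2 (dx2 c) k)"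

text \<open>D = ubar . grad, with ubar = (w1, w2).\<close>
definition Dop :: "real \<Rightarrow> real \<Rightarrow> coef \<Rightarrow> coef" where
  "Dop w1 w2 c = (\<lambda>k. complex_of_real w1 * dx1 c k + complex_of_real w2 * dx2 c k)"

definition numdiff :: "real \<Rightarrow> real \<Rightarrow> real \<Rightarrow> real \<Rightarrow> coef \<Rightarrow> coef" where
  "numdiff Dx1 Dx2 w1 w2 c = (\<lambda>k. complex_of_real (1/2) *
     (complex_of_real (Dx1 * \<bar>w1\<bar>) * dx1 (dx1 c) k + complex_of_real (Dx2 * \<bar>w2\<bar>) * dx2 (dx2 c) k))"

definition Brow1 :: "real \<Rightarrow> real \<Rightarrow> real \<Rightarrow> real \<Rightarrow> real \<Rightarrow> real \<Rightarrow> real \<Rightarrow> real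
    \<Rightarrow> real \<Rightarrow> real \<Rightarrow> real \<Rightarrow> coef \<Rightarrow> coef \<Rightarrow> coef \<Rightarrow> coef" where
  "Brow1 \<epsilon> Dt Dx1 Dx2 rb ab w1 w2 b1 b2 b3 r v1 v2 = (\<lambda>k.
     complex_of_real Dt * (complex_of_real b1 * Dop w1 w2 (Dop w1 w2 r) k
        + complex_of_real (b3 * ab\<^sup>2 / \<epsilon>\<^sup>2) * lap r k)
     + numdiff Dx1 Dx2 w1 w2 r k
     + complex_of_real (Dt * rb * b2) * Dop w1 w2 (div2 v1 v2) k)"

definition Brow2 :: "nat \<Rightarrow> real \<Rightarrow> real \<Rightarrow> real \<Rightarrow> real \<Rightarrow> real \<Rightarrow> real \<Rightarrow> real \<Rightarrow> real
    \<Rightarrow> real \<Rightarrow> real \<Rightarrow> real \<Rightarrow> coef \<Rightarrow> coef \<Rightarrow> coef \<Rightarrow> coef" where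
  "Brow2 j \<epsilon> Dt Dx1 Dx2 rb ab w1 w2 b1 b2 b3 r v1 v2 = (\<lambda>k.
     complex_of_real (Dt * ab\<^sup>2 / (rb * \<epsilon>\<^sup>2) * b2) * Dop w1 w2 (dxj j r) k
     + complex_of_real Dt * (complex_of_real b1 * Dop w1 w2 (Dop w1 w2 (if j = 1 then v1 else v2)) k
        + complex_of_real (b3 * ab\<^sup>2 / \<epsilon>\<^sup>2) * dxj j (div2 v1 v2) k)
     + numdiff Dx1 Dx2 w1 w2 (if j = 1 then v1 else v2) k)"

definition Eset :: "(coef \<times> coef \<times> coef) set" where
  "Eset = {(r, v1, v2). r \<in> L2 \<and> v1 \<in> L2 \<and> v2 \<in> L2 \<and>
      dx1 r = (\<lambda>k. 0) \<and> dx2 r = (\<lambda>k. 0) \<and> div2 v1 v2 = (\<lambda>k. 0)}"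

end

theory Submission
  imports Defs
begin

text \<open>Every operator of the system is a Fourier multiplier, so the equations decouple into
  one ODE per frequency k. For k \<noteq> 0 the Fourier coefficients of rho and of div u at k
  solve a closed linear 2 x 2 system with constant coefficients; vanishing initially, they
  vanish for all time by the energy estimate d/dt (|Y(t)|^2 exp(-2Ct)) \<le> 0. Their vanishing
  is exactly grad rho = 0 and div u = 0, and H^2 \<subseteq> L^2 gives the remaining membership in E.
  No sign condition on the parameters is needed.\<close>

definition sobolev_summable :: "coef \<Rightarrow> bool" where
  "sobolev_summable c \<longleftrightarrow> (\<lambda>k. sob_weight k * (cmod (c k))\<^sup>2) summable_on UNIV"

lemma sob_weight_ge_1: "1 \<le> sob_weight k"
  unfolding sob_weight_def by (simp add: one_le_power)

lemma sob_weight_nonneg: "0 \<le> sob_weight k"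
  using sob_weight_ge_1[of k] by simp

lemma H2_imp_sobolev_summable: "c \<in> H2 \<Longrightarrow> sobolev_summable c"
  by (simp add: H2_def sobolev_summable_def)

lemma H2_subset_L2: "H2 \<subseteq> L2"
proof
  fix c assume c: "c \<in> H2"
  have "(\<lambda>k. (cmod (c k))\<^sup>2) summable_on UNIV"
    by (rule summable_on_comparison_test[of "\<lambda>k. sob_weight k * (cmod (c k))\<^sup>2"])
       (use c sob_weight_ge_1 in \<open>auto simp: H2_def mult_le_cancel_right1\<close>)
  then show "c \<in> L2" using c by (simp add: H2_def L2_def)
qed

lemma sobolev_summable_diff:
  assumes "sobolev_summable c" "sobolev_summable e"
  shows "sobolev_summable (\<lambda>k. c k - e k)"
proof -
  have "(cmod (c k - e k))\<^sup>2 \<le> 2 * (cmod (c k))\<^sup>2 + 2 * (cmod (e k))\<^sup>2" for k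
  proof -
    have "(cmod (c k - e k))\<^sup>2 \<le> (cmod (c k) + cmod (e k))\<^sup>2"
      by (simp add: norm_triangle_ineq4 power_mono)
    also have "\<dots> \<le> 2 * (cmod (c k))\<^sup>2 + 2 * (cmod (e k))\<^sup>2"
      using sum_squares_bound[of "cmod (c k)" "cmod (e k)"] by (simp add: power2_sum)
    finally show ?thesis .
  qed
  then have "sob_weight k * (cmod (c k - e k))\<^sup>2
      \<le> sob_weight k * (2 * (cmod (c k))\<^sup>2 + 2 * (cmod (e k))\<^sup>2)" for k
    by (rule mult_left_mono) (rule sob_weight_nonneg)
  then have "sob_weight k * (cmod (c k - e k))\<^sup>2
      \<le> 2 * (sob_weight k * (cmod (c k))\<^sup>2) + 2 * (sob_weight k * (cmod (e k))\<^sup>2)" for k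
    by (simp add: algebra_simps)
  moreover have "(\<lambda>k. 2 * (sob_weight k * (cmod (c k))\<^sup>2) + 2 * (sob_weight k * (cmod (e k))\<^sup>2))
      summable_on UNIV"
    using assms unfolding sobolev_summable_def by (intro summable_on_add summable_on_cmult_right)
  moreover have "0 \<le> sob_weight k * (cmod (c k - e k))\<^sup>2" for k
    using sob_weight_nonneg by simp
  ultimately show ?thesis
    unfolding sobolev_summable_def by (blast intro: summable_on_comparison_test)
qed

lemma sobolev_summable_cmult:
  assumes "sobolev_summable c"
  shows "sobolev_summable (\<lambda>k. a * c k)"
proof -
  have "(\<lambda>k. (cmod a)\<^sup>2 * (sob_weight k * (cmod (c k))\<^sup>2)) summable_on UNIV"
    using assms unfolding sobolev_summable_def by (intro summable_on_cmult_right)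
  then show ?thesis
    unfolding sobolev_summable_def by (simp add: norm_mult power_mult_distrib mult.left_commute)
qed

lemma norm_coeff_le_h2norm:
  assumes "sobolev_summable c"
  shows "cmod (c k) \<le> h2norm c"
proof -
  have "(cmod (c k))\<^sup>2 \<le> sob_weight k * (cmod (c k))\<^sup>2"
    using sob_weight_ge_1[of k] by (simp add: mult_le_cancel_right1)
  also have "\<dots> = infsum (\<lambda>k. sob_weight k * (cmod (c k))\<^sup>2) {k}"
    by simp
  also have "\<dots> \<le> infsum (\<lambda>k. sob_weight k * (cmod (c k))\<^sup>2) UNIV"
    by (rule infsum_mono_neutral)
       (use assms in \<open>auto simp: sobolev_summable_def intro: mult_nonneg_nonneg sob_weight_nonneg\<close>)
  finally show ?thesis
    unfolding h2norm_def by (simp add: real_le_rsqrt)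
qed

lemma C1_H2_coeff_has_vector_derivative:
  assumes "C1_H2 X X'" "t \<ge> 0"
  shows "((\<lambda>s. X s k) has_vector_derivative X' t k) (at t within {0..})"
proof -
  define Q where "Q s = (\<lambda>k. (X s k - X t k) / complex_of_real (s - t) - X' t k)" for s
  have lim: "((\<lambda>s. h2norm (Q s)) \<longlongrightarrow> 0) (at t within {0..})"
    using assms unfolding C1_H2_def Q_def by auto
  have "\<forall>\<^sub>F s in at t within {0..}.
      norm ((X s k - X t k - (s - t) *\<^sub>R X' t k) /\<^sub>R norm (s - t)) \<le> h2norm (Q s)"
    unfolding eventually_at_filter
  proof (intro always_eventually allI impI)
    fix s assume s: "s \<noteq> t" "s \<in> {0..}"
    have "X s \<in> H2" "X t \<in> H2" "X' t \<in> H2"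
      using assms s unfolding C1_H2_def by auto
    then have "sobolev_summable (Q s)"
      unfolding Q_def divide_inverse mult.commute[of _ "inverse _"]
      by (intro sobolev_summable_diff sobolev_summable_cmult H2_imp_sobolev_summable)
    then have "cmod (Q s k) \<le> h2norm (Q s)"
      by (rule norm_coeff_le_h2norm)
    moreover have "Q s k = (X s k - X t k - (s - t) *\<^sub>R X' t k) / of_real (s - t)"
      using s by (simp add: Q_def field_simps scaleR_conv_of_real)
    then have "norm ((X s k - X t k - (s - t) *\<^sub>R X' t k) /\<^sub>R norm (s - t)) = cmod (Q s k)"
      by (simp only: divide_inverse_commute norm_mult norm_inverse norm_of_real norm_scaleR
          real_norm_def abs_inverse abs_abs)
    ultimately show "norm ((X s k - X t k - (s - t) *\<^sub>R X' t k) /\<^sub>R norm (s - t)) \<le> h2norm (Q s)"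
      by simp
  qed
  then have "((\<lambda>s. (X s k - X t k - (s - t) *\<^sub>R X' t k) /\<^sub>R norm (s - t)) \<longlongrightarrow> 0)
      (at t within {0..})"
    by (rule Lim_null_comparison[OF _ lim])
  then show ?thesis
    unfolding has_vector_derivative_def has_derivative_at_within
    by (simp add: bounded_linear_scaleR_left)
qed

lemma vanishes_if_derivative_linearly_bounded:
  fixes Y Y' :: "real \<Rightarrow> 'a::real_inner"
  assumes deriv: "\<And>s. s \<ge> 0 \<Longrightarrow> (Y has_vector_derivative Y' s) (at s within {0..})"
    and bound: "\<And>s. s \<ge> 0 \<Longrightarrow> norm (Y' s) \<le> C * norm (Y s)"
    and init: "Y 0 = 0" and t: "t \<ge> 0"
  shows "Y t = 0"
proof -
  define f where "f s = inner (Y s) (Y s) * exp (- (2 * C * s))" for s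
  define f' where "f' s = 2 * (inner (Y s) (Y' s) - C * inner (Y s) (Y s)) * exp (- (2 * C * s))" for s
  have f_deriv: "(f has_real_derivative f' s) (at s within {0..})" if "s \<ge> 0" for s
  proof -
    have "((\<lambda>s. inner (Y s) (Y s)) has_real_derivative 2 * inner (Y s) (Y' s)) (at s within {0..})"
      using bounded_bilinear.has_vector_derivative[OF bounded_bilinear_inner deriv[OF that] deriv[OF that]]
      by (simp add: has_real_derivative_iff_has_vector_derivative inner_commute)
    then show ?thesis
      unfolding f_def f'_def by (auto intro!: derivative_eq_intros simp: algebra_simps)
  qed
  have f'_nonpos: "f' s \<le> 0" if "s \<ge> 0" for s
  proof -
    have "inner (Y s) (Y' s) \<le> norm (Y s) * norm (Y' s)"
      by (rule norm_cauchy_schwarz)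
    also have "\<dots> \<le> C * inner (Y s) (Y s)"
      using mult_left_mono[OF bound[OF that] norm_ge_zero[of "Y s"]]
      by (simp add: dot_square_norm power2_eq_square mult.left_commute)
    finally show ?thesis
      unfolding f'_def by (simp add: mult_nonpos_nonneg)
  qed
  have "f t \<le> f 0"
  proof (cases "t = 0")
    case False
    have "0 < t"
      using t False by simp
    moreover have "(f has_derivative (*) (f' x)) (at x within {0..t})" if "0 \<le> x" "x \<le> t" for x
      using has_field_derivative_subset[OF f_deriv[OF that(1)], of "{0..t}"]
      by (simp add: has_field_derivative_def)
    ultimately obtain x where "x \<in> {0<..<t}" "f t - f 0 = f' x * (t - 0)"
      using mvt_simple[of 0 t f "\<lambda>x. (*) (f' x)"] by blast
    then show ?thesis
      using mult_nonpos_nonneg[OF f'_nonpos[of x] t] by simp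
  qed simp
  then have "inner (Y t) (Y t) \<le> 0"
    using init by (simp add: f_def mult_le_0_iff)
  then show ?thesis
    by (metis inner_gt_zero_iff not_le)
qed

lemma linear_system_2_vanishes:
  fixes y y' z z' :: "real \<Rightarrow> complex" and \<alpha> \<beta> \<gamma> \<delta> :: complex
  assumes dy: "\<And>s. s \<ge> 0 \<Longrightarrow> (y has_vector_derivative y' s) (at s within {0..})"
    and dz: "\<And>s. s \<ge> 0 \<Longrightarrow> (z has_vector_derivative z' s) (at s within {0..})"
    and ey: "\<And>s. s \<ge> 0 \<Longrightarrow> y' s = \<alpha> * y s + \<beta> * z s"
    and ez: "\<And>s. s \<ge> 0 \<Longrightarrow> z' s = \<gamma> * y s + \<delta> * z s"
    and init: "y 0 = 0" "z 0 = 0" and t: "t \<ge> 0"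
  shows "y t = 0" "z t = 0"
proof -
  define C where "C = cmod \<alpha> + cmod \<beta> + cmod \<gamma> + cmod \<delta>"
  have bound: "norm (\<alpha> * y s + \<beta> * z s, \<gamma> * y s + \<delta> * z s) \<le> C * norm (y s, z s)" for s
  proof -
    have "norm (\<alpha> * y s + \<beta> * z s, \<gamma> * y s + \<delta> * z s)
        \<le> cmod \<alpha> * cmod (y s) + cmod \<beta> * cmod (z s) + (cmod \<gamma> * cmod (y s) + cmod \<delta> * cmod (z s))"
      by (intro order.trans[OF norm_Pair_le] add_mono order.trans[OF norm_triangle_ineq])
         (simp_all add: norm_mult)
    also have "\<dots> \<le> C * norm (y s, z s)"
      using mult_left_mono[OF norm_fst_le[of "y s" "z s"] norm_ge_zero, of \<alpha>]
        mult_left_mono[OF norm_fst_le[of "y s" "z s"] norm_ge_zero, of \<gamma>]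
        mult_left_mono[OF norm_snd_le[of "z s" "y s"] norm_ge_zero, of \<beta>]
        mult_left_mono[OF norm_snd_le[of "z s" "y s"] norm_ge_zero, of \<delta>]
      unfolding C_def distrib_right by linarith
    finally show ?thesis .
  qed
  have "(y t, z t) = 0"
  proof (rule vanishes_if_derivative_linearly_bounded[where Y = "\<lambda>s. (y s, z s)" and C = C, OF _ _ _ t])
    show "((\<lambda>s. (y s, z s)) has_vector_derivative (y' s, z' s)) (at s within {0..})" if "s \<ge> 0" for s
      using dy[OF that] dz[OF that] by (rule has_vector_derivative_Pair)
    show "norm (y' s, z' s) \<le> C * norm (y s, z s)" if "s \<ge> 0" for s
      using bound ey[OF that] ez[OF that] by simp
    show "(y 0, z 0) = 0"
      using init by (simp add: zero_prod_def)
  qed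
  then show "y t = 0" "z t = 0"
    by (simp_all add: zero_prod_def)
qed

definition advection_symbol :: "real \<Rightarrow> real \<Rightarrow> int \<times> int \<Rightarrow> real" where
  "advection_symbol w1 w2 k = w1 * of_int (fst k) + w2 * of_int (snd k)"

definition freq_norm2 :: "int \<times> int \<Rightarrow> real" where
  "freq_norm2 k = (of_int (fst k))\<^sup>2 + (of_int (snd k))\<^sup>2"

definition numdiff_symbol :: "real \<Rightarrow> real \<Rightarrow> real \<Rightarrow> real \<Rightarrow> int \<times> int \<Rightarrow> real" where
  "numdiff_symbol Dx1 Dx2 w1 w2 k =
     (Dx1 * \<bar>w1\<bar> * (of_int (fst k))\<^sup>2 + Dx2 * \<bar>w2\<bar> * (of_int (snd k))\<^sup>2) / 2"

lemma Dop_apply: "Dop w1 w2 c k = \<i> * of_real (advection_symbol w1 w2 k) * c k"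
  by (simp add: Dop_def dx1_def dx2_def advection_symbol_def algebra_simps)

lemma lap_apply: "lap c k = - of_real (freq_norm2 k) * c k"
  by (simp add: lap_def dx1_def dx2_def freq_norm2_def algebra_simps power2_eq_square)

lemma numdiff_apply: "numdiff Dx1 Dx2 w1 w2 c k = - of_real (numdiff_symbol Dx1 Dx2 w1 w2 k) * c k"
  by (simp add: numdiff_def dx1_def dx2_def numdiff_symbol_def algebra_simps power2_eq_square)

lemma fourier_mode_system:
  fixes \<epsilon> Dt Dx1 Dx2 rb ab w1 w2 b1 b2 b3 :: real and r r' v1 v1' v2 v2' :: coef
    and k :: "int \<times> int" and \<omega> \<kappa> \<mu> \<sigma> :: complex
  defines "\<omega> \<equiv> complex_of_real (advection_symbol w1 w2 k)"
    and "\<kappa> \<equiv> complex_of_real (freq_norm2 k)"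
    and "\<mu> \<equiv> complex_of_real (ab\<^sup>2 / \<epsilon>\<^sup>2)"
    and "\<sigma> \<equiv> \<i> * \<omega> + Dt * (b1 * \<omega>\<^sup>2 + b3 * \<mu> * \<kappa>) + numdiff_symbol Dx1 Dx2 w1 w2 k"
  assumes eq_rho: "(\<lambda>k. r' k + Dop w1 w2 r k + complex_of_real rb * div2 v1 v2 k)
       = Brow1 \<epsilon> Dt Dx1 Dx2 rb ab w1 w2 b1 b2 b3 r v1 v2"
    and eq_u1: "(\<lambda>k. v1' k + Dop w1 w2 v1 k + complex_of_real (ab\<^sup>2 / (rb * \<epsilon>\<^sup>2)) * dx1 r k)
       = Brow2 1 \<epsilon> Dt Dx1 Dx2 rb ab w1 w2 b1 b2 b3 r v1 v2"
    and eq_u2: "(\<lambda>k. v2' k + Dop w1 w2 v2 k + complex_of_real (ab\<^sup>2 / (rb * \<epsilon>\<^sup>2)) * dx2 r k)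
       = Brow2 2 \<epsilon> Dt Dx1 Dx2 rb ab w1 w2 b1 b2 b3 r v1 v2"
  shows "r' k = - \<sigma> * r k + rb * (\<i> * Dt * b2 * \<omega> - 1) * div2 v1 v2 k"
    and "div2 v1' v2' k = \<mu> * \<kappa> / rb * (1 - \<i> * Dt * b2 * \<omega>) * r k + - \<sigma> * div2 v1 v2 k"
proof -
  have r': "r' k = Brow1 \<epsilon> Dt Dx1 Dx2 rb ab w1 w2 b1 b2 b3 r v1 v2 k - Dop w1 w2 r k - rb * div2 v1 v2 k"
    using fun_cong[OF eq_rho, of k] by (simp add: algebra_simps)
  show "r' k = - \<sigma> * r k + rb * (\<i> * Dt * b2 * \<omega> - 1) * div2 v1 v2 k"
    unfolding r' Brow1_def Dop_apply lap_apply numdiff_apply \<sigma>_def \<omega>_def \<mu>_def \<kappa>_def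
    by (simp add: algebra_simps power2_eq_square)
  have v1': "v1' k = Brow2 1 \<epsilon> Dt Dx1 Dx2 rb ab w1 w2 b1 b2 b3 r v1 v2 k - Dop w1 w2 v1 k
      - ab\<^sup>2 / (rb * \<epsilon>\<^sup>2) * dx1 r k"
    using fun_cong[OF eq_u1, of k] by (simp add: algebra_simps)
  have v2': "v2' k = Brow2 2 \<epsilon> Dt Dx1 Dx2 rb ab w1 w2 b1 b2 b3 r v1 v2 k - Dop w1 w2 v2 k
      - ab\<^sup>2 / (rb * \<epsilon>\<^sup>2) * dx2 r k"
    using fun_cong[OF eq_u2, of k] by (simp add: algebra_simps)
  show "div2 v1' v2' k = \<mu> * \<kappa> / rb * (1 - \<i> * Dt * b2 * \<omega>) * r k + - \<sigma> * div2 v1 v2 k"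
    unfolding div2_def[of v1'] dx1_def[of v1'] dx2_def[of v2'] v1' v2'
    unfolding div2_def Brow2_def dxj_def Dop_apply numdiff_apply \<sigma>_def \<omega>_def \<kappa>_def \<mu>_def
    by (simp add: dx1_def dx2_def advection_symbol_def freq_norm2_def algebra_simps
        power2_eq_square divide_inverse)
qed

lemma has_vector_derivative_div2:
  assumes "((\<lambda>s. v1 s k) has_vector_derivative v1' k) F" "((\<lambda>s. v2 s k) has_vector_derivative v2' k) F"
  shows "((\<lambda>s. div2 (v1 s) (v2 s) k) has_vector_derivative div2 v1' v2' k) F"
  unfolding div2_def dx1_def dx2_def mult.assoc
  by (intro has_vector_derivative_add has_vector_derivative_mult_right assms)

lemma Eset_iff:
  "(r, v1, v2) \<in> Eset \<longleftrightarrow>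
     r \<in> L2 \<and> v1 \<in> L2 \<and> v2 \<in> L2 \<and> (\<forall>k \<noteq> (0, 0). r k = 0) \<and> (\<forall>k. div2 v1 v2 k = 0)"
proof -
  have "dx1 r = (\<lambda>k. 0) \<and> dx2 r = (\<lambda>k. 0) \<longleftrightarrow> (\<forall>k \<noteq> (0, 0). r k = 0)"
    by (auto simp: dx1_def dx2_def fun_eq_iff prod_eq_iff)
  then show ?thesis
    unfolding Eset_def by (auto simp: fun_eq_iff)
qed

theorem mainTheorem7:
  fixes \<epsilon> Dt Dx1 Dx2 rb ab w1 w2 b1 b2 b3 :: real
    and r r' v1 v1' v2 v2' :: "real \<Rightarrow> coef"
  assumes pos: "\<epsilon> > 0" "Dt > 0" "Dx1 > 0" "Dx2 > 0" "rb > 0" "ab > 0"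
    and reg: "C1_H2 r r'" "C1_H2 v1 v1'" "C1_H2 v2 v2'"
    and eq_rho: "\<And>t. t \<ge> 0 \<Longrightarrow>
       (\<lambda>k. r' t k + Dop w1 w2 (r t) k + complex_of_real rb * div2 (v1 t) (v2 t) k)
       = Brow1 \<epsilon> Dt Dx1 Dx2 rb ab w1 w2 b1 b2 b3 (r t) (v1 t) (v2 t)"
    and eq_u1: "\<And>t. t \<ge> 0 \<Longrightarrow>
       (\<lambda>k. v1' t k + Dop w1 w2 (v1 t) k + complex_of_real (ab\<^sup>2 / (rb * \<epsilon>\<^sup>2)) * dx1 (r t) k)
       = Brow2 1 \<epsilon> Dt Dx1 Dx2 rb ab w1 w2 b1 b2 b3 (r t) (v1 t) (v2 t)"
    and eq_u2: "\<And>t. t \<ge> 0 \<Longrightarrow>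
       (\<lambda>k. v2' t k + Dop w1 w2 (v2 t) k + complex_of_real (ab\<^sup>2 / (rb * \<epsilon>\<^sup>2)) * dx2 (r t) k)
       = Brow2 2 \<epsilon> Dt Dx1 Dx2 rb ab w1 w2 b1 b2 b3 (r t) (v1 t) (v2 t)"
    and init: "(r 0, v1 0, v2 0) \<in> Eset"
  shows "\<forall>t>0. (r t, v1 t, v2 t) \<in> Eset"
proof (intro allI impI)
  fix t :: real assume "t > 0"
  then have t: "t \<ge> 0" by simp
  have modes_vanish: "r t k = 0 \<and> div2 (v1 t) (v2 t) k = 0" if k: "k \<noteq> (0, 0)" for k
  proof -
    have deriv_rho: "((\<lambda>s. r s k) has_vector_derivative r' s k) (at s within {0..})" if "s \<ge> 0" for s
      using C1_H2_coeff_has_vector_derivative[OF reg(1) that] .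
    have deriv_div: "((\<lambda>s. div2 (v1 s) (v2 s) k) has_vector_derivative div2 (v1' s) (v2' s) k)
        (at s within {0..})" if "s \<ge> 0" for s
      using that by (intro has_vector_derivative_div2 C1_H2_coeff_has_vector_derivative reg)
    obtain \<alpha> \<beta> \<gamma> \<delta> where
      "\<And>s. s \<ge> 0 \<Longrightarrow> r' s k = \<alpha> * r s k + \<beta> * div2 (v1 s) (v2 s) k"
      "\<And>s. s \<ge> 0 \<Longrightarrow> div2 (v1' s) (v2' s) k = \<gamma> * r s k + \<delta> * div2 (v1 s) (v2 s) k"
      using fourier_mode_system[OF eq_rho eq_u1 eq_u2] by blast
    moreover have "r 0 k = 0" "div2 (v1 0) (v2 0) k = 0"
      using init k unfolding Eset_iff by blast+
    ultimately show ?thesis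
      using linear_system_2_vanishes[OF deriv_rho deriv_div] t by blast
  qed
  have "div2 (v1 t) (v2 t) (0, 0) = 0"
    by (simp add: div2_def dx1_def dx2_def)
  moreover have "r t \<in> L2" "v1 t \<in> L2" "v2 t \<in> L2"
    using reg t H2_subset_L2 unfolding C1_H2_def by auto
  ultimately show "(r t, v1 t, v2 t) \<in> Eset"
    using modes_vanish unfolding Eset_iff by metis
qed

end
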